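(* If $S\in\Delta^1_n$, then $$E(S)=\frac{1}{\pi}\int_{-\infty}^{\infty}\frac{1}{z^2}\log\Big[1+\sum_{j=1}^{\lfloor n/2\rfloor}c_{2j}(S)\,z^{2j}\Big]\,dz .$$ In particular, if $S_1,S_2\in\Delta^1_n$ and $S_1\prec S_2$, then $E(S_1)<E(S_2)$.
   Context: A sidigraph is a digraph (no loops, at most one arc from $u$ to $v$) with a sign $\sigma(a)\in\{-1,1\}$ on each arc; its adjacency matrix $A(S)$ has entry $\sigma(v_i,v_j)$ if there is an arc from $v_i$ to $v_j$ and $0$ otherwise, and $\phi_S(z)=\det(zI-A(S))$. The energy of a sidigraph $S$ with eigenvalues $z_1,\dots,z_n$ is $E(S)=\sum_{j=1}^n|\Re z_j|$. The sign of a directed cycle is the product of its arc signs. $\Delta^1_n$ is the class of sidigraphs on $n$ vertices whose underlying digraph is bipartite and in which every directed cycle of length $\equiv 0\pmod 4$ is negative and every directed cycle of length $\equiv 2\pmod 4$ is positive. For $S\in\Delta^1_n$, $c_{2j}(S)$ is the number of linear subsidigraphs of $S$ of order $2j$ (subsidigraphs on $2j$ vertices in which every vertex has indegree and outdegree $1$); for such $S$ one has $\phi_S(z)=z^n+\sum_{j=1}^{\lfloor n/2\rfloor}(-1)^jc_{2j}(S)z^{n-2j}$. For $S_1,S_2\in\Delta^1_n$, write $S_1\preceq S_2$ if $c_{2j}(S_1)\le c_{2j}(S_2)$ for all $j=1,\dots,\lfloor n/2\rfloor$, and $S_1\prec S_2$ if moreover strict inequality holds for some $j$. *)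

theory Defs
  imports "HOL-Analysis.Analysis" "Jordan_Normal_Form.Char_Poly"
begin

text \<open>A sidigraph on the vertex set {0..<n} is encoded by its sign function
  sig :: nat => nat => int: there is an arc from i to j iff sig i j is nonzero,
  and then sig i j in {-1,1} is the sign of that arc.  No loops, and at most one
  arc from i to j is automatic from this encoding.\<close>

definition is_sidigraph :: "nat \<Rightarrow> (nat \<Rightarrow> nat \<Rightarrow> int) \<Rightarrow> bool" where
  "is_sidigraph n sig \<longleftrightarrow>
     (\<forall>i j. sig i j \<in> {-1, 0, 1}) \<and>
     (\<forall>i. sig i i = 0) \<and>
     (\<forall>i j. (i \<ge> n \<or> j \<ge> n) \<longrightarrow> sig i j = 0)"

definition arcs :: "(nat \<Rightarrow> nat \<Rightarrow> int) \<Rightarrow> (nat \<times> nat) set" where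
  "arcs sig = {(i, j). sig i j \<noteq> 0}"

definition adj_mat :: "nat \<Rightarrow> (nat \<Rightarrow> nat \<Rightarrow> int) \<Rightarrow> complex mat" where
  "adj_mat n sig = mat n n (\<lambda>(i, j). of_int (sig i j))"

definition char_pol :: "nat \<Rightarrow> (nat \<Rightarrow> nat \<Rightarrow> int) \<Rightarrow> complex poly" where
  "char_pol n sig = char_poly (adj_mat n sig)"

text \<open>Energy: sum of |Re z| over the eigenvalues z_1..z_n of A(S), counted with
  algebraic multiplicity (= multiplicity as roots of phi_S).\<close>

definition energy :: "nat \<Rightarrow> (nat \<Rightarrow> nat \<Rightarrow> int) \<Rightarrow> real" where
  "energy n sig = (\<Sum>z\<in>{z. poly (char_pol n sig) z = 0}.
                     of_nat (order z (char_pol n sig)) * \<bar>Re z\<bar>)"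

definition is_dicycle :: "(nat \<Rightarrow> nat \<Rightarrow> int) \<Rightarrow> nat list \<Rightarrow> bool" where
  "is_dicycle sig vs \<longleftrightarrow> length vs \<ge> 2 \<and> distinct vs \<and>
     (\<forall>i < length vs. sig (vs ! i) (vs ! ((i + 1) mod length vs)) \<noteq> 0)"

definition cycle_sign :: "(nat \<Rightarrow> nat \<Rightarrow> int) \<Rightarrow> nat list \<Rightarrow> int" where
  "cycle_sign sig vs = (\<Prod>i < length vs. sig (vs ! i) (vs ! ((i + 1) mod length vs)))"

definition bipartite_under :: "nat \<Rightarrow> (nat \<Rightarrow> nat \<Rightarrow> int) \<Rightarrow> bool" where
  "bipartite_under n sig \<longleftrightarrow>
     (\<exists>X \<subseteq> {..<n}. \<forall>i j. sig i j \<noteq> 0 \<longrightarrow> (i \<in> X \<longleftrightarrow> j \<notin> X))"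

definition Delta1 :: "nat \<Rightarrow> (nat \<Rightarrow> nat \<Rightarrow> int) set" where
  "Delta1 n = {sig. is_sidigraph n sig \<and> bipartite_under n sig \<and>
     (\<forall>vs. is_dicycle sig vs \<longrightarrow>
        (length vs mod 4 = 0 \<longrightarrow> cycle_sign sig vs = -1) \<and>
        (length vs mod 4 = 2 \<longrightarrow> cycle_sign sig vs = 1))}"

definition linear_subdigraphs :: "nat \<Rightarrow> (nat \<Rightarrow> nat \<Rightarrow> int) \<Rightarrow> nat \<Rightarrow>
    (nat set \<times> (nat \<times> nat) set) set" where
  "linear_subdigraphs n sig k = {(U, H). U \<subseteq> {..<n} \<and> card U = k \<and>
     H \<subseteq> arcs sig \<and> H \<subseteq> U \<times> U \<and>
     (\<forall>u\<in>U. card {v. (u, v) \<in> H} = 1 \<and> card {v. (v, u) \<in> H} = 1)}"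

definition c_lin :: "nat \<Rightarrow> (nat \<Rightarrow> nat \<Rightarrow> int) \<Rightarrow> nat \<Rightarrow> nat" where
  "c_lin n sig k = card (linear_subdigraphs n sig k)"

definition quasi_le :: "nat \<Rightarrow> (nat \<Rightarrow> nat \<Rightarrow> int) \<Rightarrow> (nat \<Rightarrow> nat \<Rightarrow> int) \<Rightarrow> bool" where
  "quasi_le n s1 s2 \<longleftrightarrow> (\<forall>j\<in>{1..n div 2}. c_lin n s1 (2*j) \<le> c_lin n s2 (2*j))"

definition quasi_less :: "nat \<Rightarrow> (nat \<Rightarrow> nat \<Rightarrow> int) \<Rightarrow> (nat \<Rightarrow> nat \<Rightarrow> int) \<Rightarrow> bool" where
  "quasi_less n s1 s2 \<longleftrightarrow> quasi_le n s1 s2 \<and>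
     (\<exists>j\<in>{1..n div 2}. c_lin n s1 (2*j) < c_lin n s2 (2*j))"

end

theory Submission
  imports Defs "HOL-Combinatorics.Cycles" "HOL-Real_Asymp.Real_Asymp"
begin

text \<open>In the Leibniz expansion of det(zI - A(S)) only the permutations moving vertices along
  arcs survive. Such a permutation is a product of disjoint directed cycles; bipartiteness makes
  every cycle even, and the sign conditions of the class make the sign of each cycle times the
  product of its arc signs equal to (-1)^(k/2) for a k-cycle. Hence a permutation moving k
  vertices contributes (-1)^(k/2) z^(n-k), and these permutations correspond bijectively to the
  linear subsidigraphs of order k. Therefore phi_S(i/x) = (i/x)^n R(x), where
  R(x) = 1 + sum_j c_2j x^2j, and evenness of R gives R(x)^2 = prod_k (1 + z_k^2 x^2) over the
  eigenvalues z_k. An explicit antiderivative shows that ln|1 + z^2 x^2| / x^2 integrates to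
  2 pi |Re z| over the real line, which yields the integral formula. The integrand is monotone
  in the coefficients c_2j and increases by a uniform amount on [1, 2] when one of them
  increases strictly.\<close>

section \<open>Cycles of permutations and their signs\<close>

lemma sign_cycle_of_list:
  "distinct cs \<Longrightarrow> sign (cycle_of_list cs) = (-1) ^ (length cs - 1)"
proof (induction cs rule: cycle_of_list.induct)
  case (1 i j cs)
  have "sign (cycle_of_list (i # j # cs)) =
      sign (Transposition.transpose i j) * sign (cycle_of_list (j # cs))"
    by (simp add: sign_compose permutation_swap_id permutation_of_cycle)
  also have "\<dots> = (-1) ^ (length (i # j # cs) - 1)"
    using 1 by (simp add: sign_swap_id)
  finally show ?case .
qed simp_all

lemma support_nth:
  "i < length (support p a) \<Longrightarrow> support p a ! i = (p ^^ i) a"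
  by (simp del: upt.simps)

lemma support_nth_succ:
  assumes "permutation p" and "i < length (support p a)"
  shows "p (support p a ! i) = support p a ! ((i + 1) mod length (support p a))"
proof (cases "Suc i < length (support p a)")
  case True
  then show ?thesis using assms(2) by (simp add: support_nth del: upt.simps)
next
  case False
  then have "Suc i = least_power p a" using assms(2) by simp
  then show ?thesis
    using assms least_power_of_permutation[OF assms(1), of a]
    by (simp add: support_nth del: upt.simps) (metis funpow.simps(2) o_apply)
qed

lemma prod_support_cyclic:
  assumes "permutation p"
  shows "(\<Prod>i\<in>set (support p a). h i (p i)) =
    (\<Prod>j<length (support p a). h (support p a ! j) (support p a ! ((j + 1) mod length (support p a))))"
proof -
  let ?cs = "support p a"
  have "(\<Prod>i\<in>set ?cs. h i (p i)) = (\<Prod>j<length ?cs. h (?cs ! j) (p (?cs ! j)))"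
    using prod.reindex_bij_betw[OF bij_betw_nth[OF cycle_of_permutation[OF assms] refl refl],
        of "\<lambda>i. h i (p i)"]
    by simp
  also have "\<dots> = (\<Prod>j<length ?cs. h (?cs ! j) (?cs ! ((j + 1) mod length ?cs)))"
    using support_nth_succ[OF assms] by (intro prod.cong) auto
  finally show ?thesis .
qed

lemma support_is_dicycle:
  assumes "permutation p" and "p a \<noteq> a" and "\<forall>i\<in>set (support p a). sig i (p i) \<noteq> 0"
  shows "is_dicycle sig (support p a)"
  unfolding is_dicycle_def
proof (intro conjI allI impI)
  show "2 \<le> length (support p a)" using least_power_gt_one[OF assms(1,2)] by simp
  show "distinct (support p a)" using cycle_of_permutation[OF assms(1)] .
  fix i assume "i < length (support p a)"
  then show "sig (support p a ! i) (support p a ! ((i + 1) mod length (support p a))) \<noteq> 0"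
    using assms(3) support_nth_succ[OF assms(1)] nth_mem by metis
qed

lemma permutes_split_support:
  assumes "p permutes S" and "finite S" and "a \<in> S"
  defines "q \<equiv> \<lambda>y. if y \<in> S - set (support p a) then p y else y"
  shows "q permutes S - set (support p a)" and "p = cycle_of_list (support p a) \<circ> q"
    and "set (support p a) \<subseteq> S"
proof -
  let ?cs = "support p a"
  have perm: "permutation p" using assms(1,2) permutes_imp_permutation by blast
  show qS: "q permutes S - set ?cs" unfolding q_def by (rule semidecomposition[OF assms(1,2)])
  show csS: "set ?cs \<subseteq> S"
    using permutes_in_image[OF permutes_funpow[OF assms(1)]] assms(3) by auto
  show "p = cycle_of_list ?cs \<circ> q"
  proof
    fix y
    consider "y \<in> set ?cs" | "y \<in> S - set ?cs" | "y \<notin> S" by blast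
    then show "p y = (cycle_of_list ?cs \<circ> q) y"
    proof cases
      case 1
      then show ?thesis using cycle_restrict[OF perm 1] by (simp add: q_def)
    next
      case 2
      then have "q y \<in> S - set ?cs" using permutes_in_image[OF qS] by blast
      then show ?thesis using 2 by (simp add: id_outside_supp q_def)
    next
      case 3
      then have "y \<notin> set ?cs" using csS by blast
      then show ?thesis using 3 permutes_not_in[OF assms(1) 3] by (simp add: q_def id_outside_supp)
    qed
  qed
qed

lemma sign_prod_split_support:
  fixes h :: "'a \<Rightarrow> 'a \<Rightarrow> int"
  assumes pS: "p permutes S" and fin: "finite S" and aS: "a \<in> S"
  defines "cs \<equiv> support p a" and "q \<equiv> \<lambda>y. if y \<in> S - set (support p a) then p y else y"
  shows "sign p * (\<Prod>i\<in>S. h i (p i)) =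
    ((-1) ^ (length cs - 1) * (\<Prod>j<length cs. h (cs ! j) (cs ! ((j + 1) mod length cs)))) *
    (sign q * (\<Prod>i\<in>S - set cs. h i (q i)))"
proof -
  have perm: "permutation p" using pS fin permutes_imp_permutation by blast
  note split = permutes_split_support[OF pS fin aS, folded cs_def q_def]
  have "sign p = sign (cycle_of_list cs) * sign q"
    using fin by (subst split(2))
      (simp add: sign_compose permutation_of_cycle permutes_imp_permutation[OF _ split(1)])
  also have "sign (cycle_of_list cs) = (-1) ^ (length cs - 1)"
    using sign_cycle_of_list[OF cycle_of_permutation[OF perm]] by (simp add: cs_def)
  finally have "sign p = (-1) ^ (length cs - 1) * sign q" .
  moreover have "(\<Prod>i\<in>S. h i (p i)) = (\<Prod>i\<in>set cs. h i (p i)) * (\<Prod>i\<in>S - set cs. h i (p i))"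
    using prod.subset_diff[OF split(3) fin] by (simp add: mult.commute)
  moreover have "(\<Prod>i\<in>S - set cs. h i (p i)) = (\<Prod>i\<in>S - set cs. h i (q i))"
    by (rule prod.cong) (auto simp: q_def cs_def)
  moreover have "(\<Prod>i\<in>set cs. h i (p i)) = (\<Prod>j<length cs. h (cs ! j) (cs ! ((j + 1) mod length cs)))"
    unfolding cs_def by (rule prod_support_cyclic[OF perm])
  ultimately show ?thesis by (simp add: algebra_simps)
qed

lemma bipartite_dicycle_even:
  assumes X: "\<forall>i j. sig i j \<noteq> 0 \<longrightarrow> (i \<in> X \<longleftrightarrow> j \<notin> X)" and c: "is_dicycle sig vs"
  shows "even (length vs)"
proof -
  let ?k = "length vs"
  have k: "?k \<ge> 2" and arc: "\<And>i. i < ?k \<Longrightarrow> sig (vs ! i) (vs ! ((i + 1) mod ?k)) \<noteq> 0"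
    using c by (auto simp: is_dicycle_def)
  have alt: "vs ! i \<in> X \<longleftrightarrow> (vs ! 0 \<in> X \<longleftrightarrow> even i)" if "i < ?k" for i
    using that
  proof (induction i)
    case (Suc i)
    then have "sig (vs ! i) (vs ! Suc i) \<noteq> 0" using arc[of i] by simp
    then show ?case using Suc X by auto
  qed simp
  have "Suc (?k - 1) = ?k" using k by simp
  then have "sig (vs ! (?k - 1)) (vs ! 0) \<noteq> 0" using arc[of "?k - 1"] k by simp
  then have "vs ! (?k - 1) \<in> X \<longleftrightarrow> vs ! 0 \<notin> X" using X by blast
  moreover have "?k - 1 < ?k" using k by simp
  ultimately have "odd (?k - 1)" using alt[of "?k - 1"] by blast
  then show ?thesis using k by presburger
qed

lemma Delta1_dicycle_sign:
  assumes D: "sig \<in> Delta1 n" and c: "is_dicycle sig vs"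
  shows "even (length vs)"
    and "(-1) ^ (length vs - 1) * cycle_sign sig vs = (-1) ^ (length vs div 2)"
proof -
  let ?k = "length vs"
  show ev: "even ?k"
    using D bipartite_dicycle_even[OF _ c] by (auto simp: Delta1_def bipartite_under_def)
  have cyc: "(?k mod 4 = 0 \<longrightarrow> cycle_sign sig vs = -1) \<and> (?k mod 4 = 2 \<longrightarrow> cycle_sign sig vs = 1)"
    using D c by (auto simp: Delta1_def)
  have "?k \<ge> 2" using c by (simp add: is_dicycle_def)
  then have "odd (?k - 1)" using ev by presburger
  then have "(-1::int) ^ (?k - 1) = -1" by simp
  moreover have "?k mod 4 = 0 \<and> even (?k div 2) \<or> ?k mod 4 = 2 \<and> odd (?k div 2)"
    using ev by presburger
  ultimately show "(-1) ^ (?k - 1) * cycle_sign sig vs = (-1) ^ (?k div 2)"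
    using cyc by auto
qed

lemma Delta1_perm_sign_prod:
  assumes D: "sig \<in> Delta1 n"
  shows "finite S \<Longrightarrow> p permutes S \<Longrightarrow> \<forall>i\<in>S. sig i (p i) \<noteq> 0 \<Longrightarrow>
    even (card S) \<and> sign p * (\<Prod>i\<in>S. sig i (p i)) = (-1) ^ (card S div 2)"
proof (induction "card S" arbitrary: S p rule: less_induct)
  case less
  note fin = less.prems(1) and pS = less.prems(2) and arc = less.prems(3)
  show ?case
  proof (cases "S = {}")
    case True
    then show ?thesis using pS by (simp add: permutes_empty)
  next
    case False
    then obtain a where aS: "a \<in> S" by blast
    define cs where "cs = support p a"
    define q where "q = (\<lambda>y. if y \<in> S - set cs then p y else y)"
    note split = permutes_split_support[OF pS fin aS, folded cs_def q_def]
    have perm: "permutation p" using pS fin permutes_imp_permutation by blast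
    have "sig a a = 0" using D by (simp add: Delta1_def is_sidigraph_def)
    then have "p a \<noteq> a" using arc aS by auto
    moreover have "\<forall>i\<in>set cs. sig i (p i) \<noteq> 0" using arc split(3) by blast
    ultimately have dicyc: "is_dicycle sig cs"
      unfolding cs_def by (rule support_is_dicycle[OF perm])
    have cardS: "card S = length cs + card (S - set cs)"
      using card_Diff_subset[OF _ split(3)] card_mono[OF fin split(3)] fin split(3)
        distinct_card[OF cycle_of_permutation[OF perm]]
      by (simp add: cs_def finite_subset)
    have "length cs > 0" using dicyc by (auto simp: is_dicycle_def)
    then have "card (S - set cs) < card S" using cardS by simp
    then have IH: "even (card (S - set cs)) \<and>
        sign q * (\<Prod>i\<in>S - set cs. sig i (q i)) = (-1) ^ (card (S - set cs) div 2)"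
      using less.hyps[OF _ _ split(1)] fin arc by (auto simp: q_def)
    have "sign p * (\<Prod>i\<in>S. sig i (p i)) =
        ((-1) ^ (length cs - 1) * cycle_sign sig cs) * (sign q * (\<Prod>i\<in>S - set cs. sig i (q i)))"
      using sign_prod_split_support[OF pS fin aS] by (simp add: cycle_sign_def cs_def q_def)
    also have "\<dots> = (-1) ^ (length cs div 2 + card (S - set cs) div 2)"
      using Delta1_dicycle_sign[OF D dicyc] IH by (simp add: power_add)
    finally show ?thesis
      using cardS Delta1_dicycle_sign(1)[OF D dicyc] IH by (simp add: div_plus_div_distrib_dvd_left)
  qed
qed

section \<open>Expansion of the characteristic polynomial\<close>

definition moved :: "(nat \<Rightarrow> nat) \<Rightarrow> nat set" where
  "moved p = {i. p i \<noteq> i}"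

definition arc_perms :: "nat \<Rightarrow> (nat \<Rightarrow> nat \<Rightarrow> int) \<Rightarrow> (nat \<Rightarrow> nat) set" where
  "arc_perms n sig = {p. p permutes {0..<n} \<and> (\<forall>i\<in>moved p. sig i (p i) \<noteq> 0)}"

lemma permutes_moved: "p permutes S \<Longrightarrow> p permutes moved p"
  unfolding permutes_def moved_def by auto

lemma moved_subset: "p permutes S \<Longrightarrow> moved p \<subseteq> S"
  unfolding moved_def using permutes_not_in by fastforce

lemma finite_arc_perms: "finite (arc_perms n sig)"
  by (rule finite_subset[OF _ finite_permutations[of "{0..<n}"]]) (auto simp: arc_perms_def)

lemma arc_perms_moved:
  assumes "p \<in> arc_perms n sig"
  shows "finite (moved p)" and "card (moved p) \<le> n"
  using assms moved_subset[of p "{0..<n}"] finite_subset card_mono[of "{0..<n}" "moved p"]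
  by (auto simp: arc_perms_def)

lemma arc_perms_sign:
  assumes D: "sig \<in> Delta1 n" and p: "p \<in> arc_perms n sig"
  shows "even (card (moved p))"
    and "sign p * (\<Prod>i\<in>moved p. sig i (p i)) = (-1) ^ (card (moved p) div 2)"
  using Delta1_perm_sign_prod[OF D arc_perms_moved(1)[OF p] permutes_moved] p
  by (auto simp: arc_perms_def)

lemma poly_char_pol_Leibniz:
  "poly (char_pol n sig) z = (\<Sum>p | p permutes {0..<n}. of_int (sign p) *
      (\<Prod>i = 0..<n. (if p i = i then z else 0) - of_int (sig i (p i))))"
proof -
  have A: "adj_mat n sig \<in> carrier_mat n n" by (simp add: adj_mat_def)
  have "poly (char_pol n sig) z = det (- char_matrix (adj_mat n sig) z)"
    unfolding char_pol_def using char_poly_matrix[OF A] .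
  also have "\<dots> = (\<Sum>p | p permutes {0..<n}. of_int (sign p) *
      (\<Prod>i = 0..<n. (- char_matrix (adj_mat n sig) z) $$ (i, p i)))"
    using det_def'[of "- char_matrix (adj_mat n sig) z" n] A by simp
  also have "\<dots> = (\<Sum>p | p permutes {0..<n}. of_int (sign p) *
      (\<Prod>i = 0..<n. (if p i = i then z else 0) - of_int (sig i (p i))))"
    by (intro sum.cong prod.cong arg_cong[where f = "\<lambda>x. _ * x"] refl)
      (auto simp: char_matrix_def adj_mat_def permutes_in_image)
  finally show ?thesis .
qed

lemma Delta1_Leibniz_term:
  fixes z :: complex
  assumes D: "sig \<in> Delta1 n" and pn: "p permutes {0..<n}"
  shows "of_int (sign p) * (\<Prod>i = 0..<n. (if p i = i then z else 0) - of_int (sig i (p i))) =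
    (if p \<in> arc_perms n sig then (-1) ^ (card (moved p) div 2) * z ^ (n - card (moved p)) else 0)"
proof -
  have sii: "\<And>i. sig i i = 0" using D by (simp add: Delta1_def is_sidigraph_def)
  have sub: "moved p \<subseteq> {0..<n}" using moved_subset[OF pn] .
  have fin: "finite (moved p)" using sub finite_subset by blast
  have "(\<Prod>i = 0..<n. (if p i = i then z else 0) - of_int (sig i (p i))) =
      (\<Prod>i\<in>moved p. (if p i = i then z else 0) - of_int (sig i (p i))) *
      (\<Prod>i\<in>{0..<n} - moved p. (if p i = i then z else 0) - of_int (sig i (p i)))"
    using prod.subset_diff[OF sub] by (simp add: mult.commute)
  also have "\<dots> = (\<Prod>i\<in>moved p. - of_int (sig i (p i))) * (\<Prod>i\<in>{0..<n} - moved p. z)"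
    by (intro arg_cong2[where f = times] prod.cong) (auto simp: moved_def sii)
  also have "\<dots> = (-1) ^ card (moved p) * of_int (\<Prod>i\<in>moved p. sig i (p i)) * z ^ (n - card (moved p))"
    using card_Diff_subset[OF fin sub] by (simp add: prod_uminus)
  finally have P: "(\<Prod>i = 0..<n. (if p i = i then z else 0) - of_int (sig i (p i))) =
      (-1) ^ card (moved p) * of_int (\<Prod>i\<in>moved p. sig i (p i)) * z ^ (n - card (moved p))" .
  show ?thesis
  proof (cases "p \<in> arc_perms n sig")
    case True
    note ev = arc_perms_sign(1)[OF D True] and sg = arc_perms_sign(2)[OF D True]
    have "of_int (sign p) * (\<Prod>i = 0..<n. (if p i = i then z else 0) - of_int (sig i (p i))) =
      (-1) ^ card (moved p) * of_int (sign p * (\<Prod>i\<in>moved p. sig i (p i))) * z ^ (n - card (moved p))"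
      unfolding P by (simp add: algebra_simps)
    also have "\<dots> = (-1) ^ (card (moved p) div 2) * z ^ (n - card (moved p))"
      using ev sg by simp
    finally show ?thesis using True by simp
  next
    case False
    then have "(\<Prod>i\<in>moved p. sig i (p i)) = 0" using fin pn by (auto simp: arc_perms_def)
    then show ?thesis using False P by simp
  qed
qed

lemma poly_char_pol_arc_perms:
  fixes z :: complex
  assumes "sig \<in> Delta1 n"
  shows "poly (char_pol n sig) z =
    (\<Sum>p\<in>arc_perms n sig. (-1) ^ (card (moved p) div 2) * z ^ (n - card (moved p)))"
proof -
  have "poly (char_pol n sig) z = (\<Sum>p | p permutes {0..<n}. if p \<in> arc_perms n sig
      then (-1) ^ (card (moved p) div 2) * z ^ (n - card (moved p)) else 0)"
    unfolding poly_char_pol_Leibniz by (rule sum.cong) (simp_all add: Delta1_Leibniz_term[OF assms])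
  also have "\<dots> = (\<Sum>p\<in>arc_perms n sig. (-1) ^ (card (moved p) div 2) * z ^ (n - card (moved p)))"
    by (rule sum.mono_neutral_cong_right)
      (auto simp: finite_permutations arc_perms_def[of n sig])
  finally show ?thesis .
qed

lemma poly_char_pol_imaginary:
  assumes D: "sig \<in> Delta1 n" and x: "x \<noteq> 0"
  shows "poly (char_pol n sig) (\<i> / of_real x) =
    (\<i> / of_real x) ^ n * of_real (\<Sum>p\<in>arc_perms n sig. x ^ card (moved p))"
proof -
  have "(-1) ^ (card (moved p) div 2) * (\<i> / of_real x) ^ (n - card (moved p)) =
      (\<i> / of_real x) ^ n * of_real (x ^ card (moved p))" if p: "p \<in> arc_perms n sig" for p
  proof -
    obtain j where k: "card (moved p) = 2 * j" using arc_perms_sign(1)[OF D p] by blast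
    obtain m where nm: "n = 2 * j + m" using arc_perms_moved(2)[OF p] k le_Suc_ex by metis
    have "(\<i> / of_real x) ^ (2 * j) * of_real x ^ (2 * j) = \<i> ^ (2 * j)"
      using x by (simp add: power_divide)
    also have "\<dots> = (-1) ^ j" by (simp add: power_mult)
    finally have "(\<i> / of_real x) ^ (2 * j) * of_real x ^ (2 * j) = (-1) ^ j" .
    then show ?thesis using x by (simp add: k nm power_add field_simps)
  qed
  then show ?thesis
    unfolding poly_char_pol_arc_perms[OF D] by (simp add: sum_distrib_left)
qed

section \<open>Linear subsidigraphs as permutations\<close>

definition perm_digraph :: "(nat \<Rightarrow> nat) \<Rightarrow> nat set \<times> (nat \<times> nat) set" where
  "perm_digraph p = (moved p, (\<lambda>i. (i, p i)) ` moved p)"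

lemma inj_perm_digraph: "inj perm_digraph"
proof (rule injI)
  fix p q assume "perm_digraph p = perm_digraph q"
  then have s: "moved p = moved q" and g: "(\<lambda>i. (i, p i)) ` moved p = (\<lambda>i. (i, q i)) ` moved q"
    unfolding perm_digraph_def prod.inject by blast+
  show "p = q"
  proof
    fix i
    show "p i = q i"
    proof (cases "i \<in> moved p")
      case True
      then have "(i, p i) \<in> (\<lambda>i. (i, q i)) ` moved q" using g by blast
      then show ?thesis by blast
    next
      case False
      then have "i \<notin> moved q" using s by simp
      then show ?thesis using False by (simp add: moved_def)
    qed
  qed
qed

lemma card_eq_1_iff_ex1: "card {v. P v} = 1 \<longleftrightarrow> (\<exists>!v. P v)"
  by (auto simp: card_1_singleton_iff) (metis mem_Collect_eq singleton_iff)+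

lemma perm_digraph_linear:
  assumes p: "p \<in> arc_perms n sig"
  shows "perm_digraph p \<in> linear_subdigraphs n sig (card (moved p))"
proof -
  let ?H = "(\<lambda>i. (i, p i)) ` moved p"
  have pn: "p permutes {0..<n}" using p by (simp add: arc_perms_def)
  have inj: "inj p" using pn permutes_inj by blast
  have indeg: "\<exists>!v. (v, u) \<in> ?H" if u: "u \<in> moved p" for u
  proof -
    have pw: "p (inv_into UNIV p u) = u" using pn permutes_inverses(1) by fast
    then have "(inv_into UNIV p u, u) \<in> ?H" using u by (force simp: moved_def)
    moreover have "v = inv_into UNIV p u" if "(v, u) \<in> ?H" for v
      using that pw inj by (auto simp: inj_eq)
    ultimately show ?thesis by blast
  qed
  have outdeg: "\<exists>!v. (u, v) \<in> ?H" if "u \<in> moved p" for u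
    using that by blast
  have "moved p \<subseteq> {..<n}" using moved_subset[OF pn] by auto
  moreover have "?H \<subseteq> arcs sig" using p by (auto simp: arc_perms_def arcs_def)
  moreover have "?H \<subseteq> moved p \<times> moved p" using inj by (auto simp: moved_def inj_eq)
  moreover have "\<forall>u\<in>moved p. (\<exists>!v. (u, v) \<in> ?H) \<and> (\<exists>!v. (v, u) \<in> ?H)"
    using indeg outdeg by blast
  ultimately show ?thesis
    unfolding perm_digraph_def linear_subdigraphs_def card_eq_1_iff_ex1 mem_Collect_eq case_prod_conv
    by (intro conjI refl)
qed

lemma linear_subdigraph_perm:
  assumes loopless: "\<forall>i. sig i i = 0" and L: "(U, H) \<in> linear_subdigraphs n sig k"
  obtains p where "p \<in> arc_perms n sig" and "card (moved p) = k" and "perm_digraph p = (U, H)"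
proof -
  have U: "U \<subseteq> {..<n}" "card U = k" and Ha: "H \<subseteq> arcs sig" and HU: "H \<subseteq> U \<times> U"
    and deg: "\<forall>u\<in>U. (\<exists>!v. (u, v) \<in> H) \<and> (\<exists>!v. (v, u) \<in> H)"
    using L unfolding linear_subdigraphs_def card_eq_1_iff_ex1 by simp_all
  have out: "\<exists>!v. (u, v) \<in> H" and inn: "\<exists>!v. (v, u) \<in> H" if "u \<in> U" for u
    using deg[rule_format, OF that] by (rule conjunct1, rule conjunct2)
  define p where "p i = (if i \<in> U then THE v. (i, v) \<in> H else i)" for i
  have pH_in: "(i, p i) \<in> H" if "i \<in> U" for i
    using theI'[OF out[OF that]] that by (simp add: p_def)
  have p_out: "p i = i" if "i \<notin> U" for i
    using that by (simp add: p_def)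
  have pH: "p i = v" if "(i, v) \<in> H" for i v
  proof -
    have i: "i \<in> U" using that HU by blast
    then show ?thesis using the1_equality[OF out[OF i] that] by (simp add: p_def)
  qed
  have pU: "p i \<in> U" if "i \<in> U" for i
    using pH_in[OF that] HU by blast
  have "p i \<noteq> i" if "i \<in> U" for i
    using pH_in[OF that] Ha loopless unfolding arcs_def by force
  then have moved: "moved p = U" using p_out unfolding moved_def by blast
  have "inj_on p U"
  proof (rule inj_onI)
    fix x y assume x: "x \<in> U" and y: "y \<in> U" and "p x = p y"
    then have "(x, p x) \<in> H" and "(y, p x) \<in> H" using pH_in by metis+
    then show "x = y" using inn[OF pU[OF x]] by blast
  qed
  then have "p permutes U"
    using finite_subset[OF U(1)] pU p_out by (intro inj_imp_permutes) auto
  then have "p permutes {0..<n}" using U(1) by (metis atLeast0LessThan permutes_subset)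
  moreover have "\<forall>i\<in>moved p. sig i (p i) \<noteq> 0"
    using pH_in Ha unfolding moved arcs_def by blast
  moreover have "(\<lambda>i. (i, p i)) ` U = H"
    using pH_in pH HU by fastforce
  ultimately show ?thesis
    using moved U(2) by (intro that[of p]) (simp_all add: arc_perms_def perm_digraph_def)
qed

lemma c_lin_card_arc_perms:
  assumes D: "sig \<in> Delta1 n"
  shows "c_lin n sig k = card {p \<in> arc_perms n sig. card (moved p) = k}"
proof -
  have loopless: "\<forall>i. sig i i = 0" using D by (simp add: Delta1_def is_sidigraph_def)
  have "perm_digraph ` {p \<in> arc_perms n sig. card (moved p) = k} = linear_subdigraphs n sig k"
  proof
    show "perm_digraph ` {p \<in> arc_perms n sig. card (moved p) = k} \<subseteq> linear_subdigraphs n sig k"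
      using perm_digraph_linear by blast
    show "linear_subdigraphs n sig k \<subseteq> perm_digraph ` {p \<in> arc_perms n sig. card (moved p) = k}"
    proof
      fix L assume "L \<in> linear_subdigraphs n sig k"
      then obtain p where "p \<in> arc_perms n sig" "card (moved p) = k" "perm_digraph p = L"
        using linear_subdigraph_perm[of sig, OF loopless] by (metis surj_pair)
      then show "L \<in> perm_digraph ` {p \<in> arc_perms n sig. card (moved p) = k}" by blast
    qed
  qed
  then show ?thesis
    unfolding c_lin_def using card_image[OF inj_on_subset[OF inj_perm_digraph subset_UNIV]] by metis
qed

definition linear_gf :: "nat \<Rightarrow> (nat \<Rightarrow> nat \<Rightarrow> int) \<Rightarrow> real \<Rightarrow> real" where
  "linear_gf n sig x = 1 + (\<Sum>j = 1..n div 2. real (c_lin n sig (2 * j)) * x ^ (2 * j))"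

lemma arc_perms_moved_empty: "{p \<in> arc_perms n sig. card (moved p) = 0} = {id}"
  using arc_perms_moved(1)
  by (auto simp: arc_perms_def moved_def permutes_id)

lemma sum_arc_perms_eq_linear_gf:
  assumes D: "sig \<in> Delta1 n"
  shows "(\<Sum>p\<in>arc_perms n sig. x ^ card (moved p)) = linear_gf n sig x"
proof -
  define c where "c k = real (card {p \<in> arc_perms n sig. card (moved p) = k})" for k
  have c_0: "c k = 0" if k: "k \<in> {1..n}" "k \<notin> (\<lambda>j. 2 * j) ` {1..n div 2}" for k
  proof -
    have "odd k"
    proof
      assume "even k"
      then obtain j where "k = 2 * j" by blast
      then show False using k by auto
    qed
    then have "{p \<in> arc_perms n sig. card (moved p) = k} = {}"
      using arc_perms_sign(1)[OF D] by auto
    then show ?thesis unfolding c_def by (simp only: card.empty of_nat_0)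
  qed
  have "(\<Sum>p\<in>arc_perms n sig. x ^ card (moved p)) =
      (\<Sum>k\<in>{0..n}. \<Sum>p\<in>{p \<in> arc_perms n sig. card (moved p) = k}. x ^ card (moved p))"
    by (rule sum.group[symmetric]) (use finite_arc_perms arc_perms_moved(2) in auto)
  also have "\<dots> = (\<Sum>k\<in>{0..n}. c k * x ^ k)"
    by (simp add: c_def)
  also have "\<dots> = 1 + (\<Sum>k\<in>{1..n}. c k * x ^ k)"
    by (simp add: sum.atLeast_Suc_atMost c_def arc_perms_moved_empty)
  also have "(\<Sum>k\<in>{1..n}. c k * x ^ k) = (\<Sum>k\<in>(\<lambda>j. 2 * j) ` {1..n div 2}. c k * x ^ k)"
    using c_0 by (intro sum.mono_neutral_right) auto
  also have "\<dots> = (\<Sum>j = 1..n div 2. c (2 * j) * x ^ (2 * j))"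
    by (subst sum.reindex) (auto simp: inj_on_def)
  finally show ?thesis
    by (simp add: linear_gf_def c_def c_lin_card_arc_perms[OF D])
qed

section \<open>Factorization over the eigenvalues\<close>

lemma char_pol_factorized:
  obtains a where "char_pol n sig = (\<Prod>i<n. [:- a i, 1:])"
proof -
  have "adj_mat n sig \<in> carrier_mat n n" by (simp add: adj_mat_def)
  then obtain as where "char_pol n sig = (\<Prod>a\<leftarrow>as. [:- a, 1:])" and "length as = n"
    using char_poly_factorized unfolding char_pol_def by blast
  then have "char_pol n sig = (\<Prod>i<n. [:- as ! i, 1:])"
    by (simp add: prod.list_conv_set_nth atLeast0LessThan)
  then show ?thesis by (rule that)
qed

lemma order_prod:
  fixes p :: "'a \<Rightarrow> 'b::idom poly"
  shows "finite I \<Longrightarrow> (\<And>i. i \<in> I \<Longrightarrow> p i \<noteq> 0) \<Longrightarrow> order z (\<Prod>i\<in>I. p i) = (\<Sum>i\<in>I. order z (p i))"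
  by (induction I rule: finite_induct) (simp_all add: order_mult order_0I)

lemma order_linear_factor: "order z [:- a, 1:] = (if z = a then 1 else 0)"
  using order_power_n_n[of a 1] by (simp add: order_0I)

lemma energy_factorized:
  assumes cp: "char_pol n sig = (\<Prod>i<n. [:- a i, 1:])"
  shows "energy n sig = (\<Sum>i<n. \<bar>Re (a i)\<bar>)"
proof -
  have roots: "{z. poly (char_pol n sig) z = 0} = a ` {..<n}"
    unfolding cp by (auto simp: poly_prod)
  have "energy n sig = (\<Sum>z\<in>a ` {..<n}. \<Sum>i<n. if z = a i then \<bar>Re z\<bar> else 0)"
    unfolding energy_def roots unfolding cp
    by (simp add: order_prod order_linear_factor of_nat_sum sum_distrib_right)
      (intro sum.cong refl, simp)
  also have "\<dots> = (\<Sum>i<n. \<Sum>z\<in>a ` {..<n}. if z = a i then \<bar>Re z\<bar> else 0)"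
    by (rule sum.swap)
  also have "\<dots> = (\<Sum>i<n. \<bar>Re (a i)\<bar>)"
    by (simp add: sum.delta)
  finally show ?thesis .
qed

lemma linear_gf_ge_1: "1 \<le> linear_gf n sig x"
  unfolding linear_gf_def by (auto intro!: sum_nonneg simp: power_mult)

lemma linear_gf_0: "linear_gf n sig 0 = 1"
  by (auto simp: linear_gf_def intro!: sum.neutral)

lemma linear_gf_even: "linear_gf n sig (- x) = linear_gf n sig x"
  by (simp add: linear_gf_def power_mult)

lemma linear_gf_factorized:
  assumes D: "sig \<in> Delta1 n" and cp: "char_pol n sig = (\<Prod>i<n. [:- a i, 1:])" and x: "x \<noteq> 0"
  shows "complex_of_real (linear_gf n sig x) = (\<Prod>i<n. 1 + \<i> * a i * of_real x)"
proof -
  let ?c = "\<i> / complex_of_real x"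
  have "?c ^ n * of_real (linear_gf n sig x) = poly (char_pol n sig) ?c"
    using poly_char_pol_imaginary[OF D x] sum_arc_perms_eq_linear_gf[OF D] by simp
  also have "\<dots> = (\<Prod>i<n. ?c * (1 + \<i> * a i * of_real x))"
    unfolding cp poly_prod using x by (intro prod.cong) (simp_all add: field_simps)
  also have "\<dots> = ?c ^ n * (\<Prod>i<n. 1 + \<i> * a i * of_real x)"
    by (subst prod.distrib) simp
  finally show ?thesis using x by simp
qed

lemma linear_gf_sq_factorized:
  assumes D: "sig \<in> Delta1 n" and cp: "char_pol n sig = (\<Prod>i<n. [:- a i, 1:])"
  shows "(complex_of_real (linear_gf n sig x))\<^sup>2 = (\<Prod>i<n. 1 + (a i)\<^sup>2 * (of_real x)\<^sup>2)"
proof (cases "x = 0")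
  case True
  then show ?thesis by (simp add: linear_gf_0)
next
  case False
  have "(complex_of_real (linear_gf n sig x))\<^sup>2 =
      of_real (linear_gf n sig x) * of_real (linear_gf n sig (- x))"
    by (simp add: linear_gf_even power2_eq_square)
  also have "\<dots> = (\<Prod>i<n. (1 + \<i> * a i * of_real x) * (1 + \<i> * a i * of_real (- x)))"
    using linear_gf_factorized[OF D cp] False by (simp add: prod.distrib)
  also have "\<dots> = (\<Prod>i<n. 1 + (a i)\<^sup>2 * (of_real x)\<^sup>2)"
    by (intro prod.cong) (simp_all add: algebra_simps power2_eq_square)
  finally show ?thesis .
qed

lemma ln_linear_gf:
  assumes D: "sig \<in> Delta1 n" and cp: "char_pol n sig = (\<Prod>i<n. [:- a i, 1:])"
  shows "ln (linear_gf n sig x) = (\<Sum>i<n. ln (cmod (1 + (a i)\<^sup>2 * (of_real x)\<^sup>2))) / 2"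
    and "i < n \<Longrightarrow> 1 + (a i)\<^sup>2 * (of_real x)\<^sup>2 \<noteq> 0"
proof -
  have R: "1 \<le> linear_gf n sig x" by (rule linear_gf_ge_1)
  then have "(\<Prod>i<n. 1 + (a i)\<^sup>2 * (of_real x)\<^sup>2) \<noteq> 0"
    using linear_gf_sq_factorized[OF D cp, of x]
    by (metis not_one_le_zero of_real_eq_0_iff zero_eq_power2)
  then have nz: "1 + (a j)\<^sup>2 * (of_real x)\<^sup>2 \<noteq> 0" if "j < n" for j
    using that by simp
  then show "i < n \<Longrightarrow> 1 + (a i)\<^sup>2 * (of_real x)\<^sup>2 \<noteq> 0" .
  have "2 * ln (linear_gf n sig x) = ln (cmod ((complex_of_real (linear_gf n sig x))\<^sup>2))"
    using R by (simp add: norm_power ln_realpow)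
  also have "\<dots> = (\<Sum>i<n. ln (cmod (1 + (a i)\<^sup>2 * (of_real x)\<^sup>2)))"
    unfolding linear_gf_sq_factorized[OF D cp] prod_norm[symmetric] using nz by (subst ln_prod) auto
  finally show "ln (linear_gf n sig x) = (\<Sum>i<n. ln (cmod (1 + (a i)\<^sup>2 * (of_real x)\<^sup>2))) / 2"
    by simp
qed

section \<open>An antiderivative of ln |1 + s^2 x^2| / x^2\<close>

text \<open>With s = p + i q and r = |s|^2 one has Qm x * Qp x = |1 + s^2 x^2|^2 (see
  ln_norm_one_plus_sq below), so L x = ln |1 + s^2 x^2|.\<close>

locale log_quadratic =
  fixes p q r :: real
  assumes p_pos: "0 < p" and r_eq: "r = p\<^sup>2 + q\<^sup>2"
begin

definition Qm :: "real \<Rightarrow> real" where "Qm x = 1 - 2 * q * x + r * x\<^sup>2"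
definition Qp :: "real \<Rightarrow> real" where "Qp x = 1 + 2 * q * x + r * x\<^sup>2"

definition L :: "real \<Rightarrow> real" where "L x = (ln (Qm x) + ln (Qp x)) / 2"

definition G :: "real \<Rightarrow> real" where
  "G x = q / 2 * (ln (Qm x) - ln (Qp x)) + p * (arctan ((r * x - q) / p) + arctan ((r * x + q) / p))"

text \<open>F is an antiderivative of L x / x^2, obtained by integrating by parts: G' = L' / x.\<close>
definition F :: "real \<Rightarrow> real" where "F x = (if x = 0 then 0 else - L x / x) + G x"

lemma r_Qm: "r * Qm x = (r * x - q)\<^sup>2 + p\<^sup>2"
  and r_Qp: "r * Qp x = (r * x + q)\<^sup>2 + p\<^sup>2"
  unfolding Qm_def Qp_def unfolding r_eq by (simp_all add: power2_eq_square algebra_simps)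

lemma r_pos: "0 < r"
  using p_pos r_eq by (simp add: add_pos_nonneg)

lemma Qm_pos: "0 < Qm x" and Qp_pos: "0 < Qp x"
proof -
  have "0 < (r * x - q)\<^sup>2 + p\<^sup>2" "0 < (r * x + q)\<^sup>2 + p\<^sup>2"
    using p_pos by (simp_all add: add_nonneg_pos)
  then show "0 < Qm x" "0 < Qp x"
    using r_Qm r_Qp r_pos by (metis zero_less_mult_pos)+
qed

lemma has_derivative_ln_Qm:
  "((\<lambda>x. ln (Qm x)) has_real_derivative (2 * r * x - 2 * q) / Qm x) (at x)"
proof -
  have "(Qm has_real_derivative 2 * r * x - 2 * q) (at x)"
    unfolding Qm_def[abs_def] by (auto intro!: derivative_eq_intros)
  from DERIV_chain2[OF DERIV_ln_divide[OF Qm_pos] this] show ?thesis by simp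
qed

lemma has_derivative_ln_Qp:
  "((\<lambda>x. ln (Qp x)) has_real_derivative (2 * r * x + 2 * q) / Qp x) (at x)"
proof -
  have "(Qp has_real_derivative 2 * r * x + 2 * q) (at x)"
    unfolding Qp_def[abs_def] by (auto intro!: derivative_eq_intros)
  from DERIV_chain2[OF DERIV_ln_divide[OF Qp_pos] this] show ?thesis by simp
qed

lemma has_derivative_arctan_m:
  "((\<lambda>x. arctan ((r * x - q) / p)) has_real_derivative p / Qm x) (at x)"
proof -
  have "((\<lambda>x. arctan ((r * x - q) / p)) has_real_derivative
      inverse (1 + ((r * x - q) / p)\<^sup>2) * (r / p)) (at x)"
    using p_pos by (auto intro!: derivative_eq_intros)
  moreover have "1 + ((r * x - q) / p)\<^sup>2 = r * Qm x / p\<^sup>2"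
    using p_pos by (simp add: r_Qm field_simps)
  ultimately show ?thesis
    using p_pos r_pos Qm_pos[of x] by (simp add: field_simps power2_eq_square)
qed

lemma has_derivative_arctan_p:
  "((\<lambda>x. arctan ((r * x + q) / p)) has_real_derivative p / Qp x) (at x)"
proof -
  have "((\<lambda>x. arctan ((r * x + q) / p)) has_real_derivative
      inverse (1 + ((r * x + q) / p)\<^sup>2) * (r / p)) (at x)"
    using p_pos by (auto intro!: derivative_eq_intros)
  moreover have "1 + ((r * x + q) / p)\<^sup>2 = r * Qp x / p\<^sup>2"
    using p_pos by (simp add: r_Qp field_simps)
  ultimately show ?thesis
    using p_pos r_pos Qp_pos[of x] by (simp add: field_simps power2_eq_square)
qed

lemma has_derivative_L:
  "(L has_real_derivative ((2 * r * x - 2 * q) / Qm x + (2 * r * x + 2 * q) / Qp x) / 2) (at x)"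
  unfolding L_def[abs_def]
  using DERIV_cdivide[OF DERIV_add[OF has_derivative_ln_Qm has_derivative_ln_Qp], of 2] .

lemma has_derivative_G:
  "(G has_real_derivative q / 2 * ((2 * r * x - 2 * q) / Qm x - (2 * r * x + 2 * q) / Qp x)
      + p * (p / Qm x + p / Qp x)) (at x)"
  unfolding G_def[abs_def]
  using DERIV_add[OF DERIV_cmult[OF DERIV_diff[OF has_derivative_ln_Qm has_derivative_ln_Qp], of "q / 2"]
      DERIV_cmult[OF DERIV_add[OF has_derivative_arctan_m has_derivative_arctan_p], of p]] .

lemma derivative_G_eq:
  assumes x: "x \<noteq> 0"
  shows "q / 2 * ((2 * r * x - 2 * q) / Qm x - (2 * r * x + 2 * q) / Qp x) + p * (p / Qm x + p / Qp x)
       = ((2 * r * x - 2 * q) / Qm x + (2 * r * x + 2 * q) / Qp x) / 2 / x"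
proof -
  define A B where "A = Qm x" and "B = Qp x"
  have A: "A \<noteq> 0" and B: "B \<noteq> 0"
    using Qm_pos Qp_pos by (auto simp: A_def B_def less_imp_neq[symmetric])
  have hA: "(r * x - q) - x * (q * (r * x - q) + p\<^sup>2) = - q * A"
    and hB: "(r * x + q) - x * (p\<^sup>2 - q * (r * x + q)) = q * B"
    unfolding A_def B_def Qm_def Qp_def unfolding r_eq by (simp_all add: algebra_simps power2_eq_square)
  have eA: "(r * x - q) / (x * A) - (q * (r * x - q) + p\<^sup>2) / A = - q / x"
  proof -
    have "(r * x - q) / (x * A) - (q * (r * x - q) + p\<^sup>2) / A
        = ((r * x - q) - x * (q * (r * x - q) + p\<^sup>2)) / (x * A)"
      using x A by (simp add: field_simps)
    then show ?thesis using hA x A by simp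
  qed
  have eB: "(r * x + q) / (x * B) - (p\<^sup>2 - q * (r * x + q)) / B = q / x"
  proof -
    have "(r * x + q) / (x * B) - (p\<^sup>2 - q * (r * x + q)) / B
        = ((r * x + q) - x * (p\<^sup>2 - q * (r * x + q))) / (x * B)"
      using x B by (simp add: field_simps)
    then show ?thesis using hB x B by simp
  qed
  have "q / 2 * ((2 * r * x - 2 * q) / A - (2 * r * x + 2 * q) / B) + p * (p / A + p / B)
      = (q * (r * x - q) + p\<^sup>2) / A + (p\<^sup>2 - q * (r * x + q)) / B"
    using A B by (simp add: field_simps power2_eq_square)
  also have "\<dots> = (r * x - q) / (x * A) + (r * x + q) / (x * B)"
    using eA eB by simp
  also have "\<dots> = ((2 * r * x - 2 * q) / A + (2 * r * x + 2 * q) / B) / 2 / x"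
    using A B x by (simp add: field_simps)
  finally show ?thesis by (simp add: A_def B_def)
qed

lemma has_derivative_F:
  assumes x: "x \<noteq> 0"
  shows "(F has_real_derivative L x / x\<^sup>2) (at x)"
proof -
  let ?L' = "((2 * r * x - 2 * q) / Qm x + (2 * r * x + 2 * q) / Qp x) / 2"
  let ?G' = "q / 2 * ((2 * r * x - 2 * q) / Qm x - (2 * r * x + 2 * q) / Qp x) + p * (p / Qm x + p / Qp x)"
  have "((\<lambda>y. - (L y / y) + G y) has_real_derivative - ((?L' * x - L x * 1) / (x * x)) + ?G') (at x)"
    using DERIV_add[OF DERIV_minus[OF DERIV_divide[OF has_derivative_L DERIV_ident x]] has_derivative_G] .
  moreover have "- ((?L' * x - L x * 1) / (x * x)) + ?G' = L x / x\<^sup>2"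
    using derivative_G_eq[OF x] x by (simp add: field_simps power2_eq_square)
  ultimately have "((\<lambda>y. - (L y / y) + G y) has_real_derivative L x / x\<^sup>2) (at x)"
    by simp
  then show ?thesis
    by (rule has_field_derivative_transform_within_open[of _ _ _ "-{0}"]) (auto simp: x F_def)
qed

lemma L_0: "L 0 = 0" and G_0: "G 0 = 0"
  by (simp_all add: L_def G_def Qm_def Qp_def arctan_minus)

lemma continuous_on_F: "continuous_on UNIV F"
proof -
  have "isCont F 0"
  proof -
    have "((\<lambda>y. (L y - L 0) / (y - 0)) \<longlongrightarrow>
        ((2 * r * 0 - 2 * q) / Qm 0 + (2 * r * 0 + 2 * q) / Qp 0) / 2) (at 0)"
      using has_derivative_L[of 0] by (simp add: has_field_derivative_iff)
    then have "((\<lambda>y. L y / y) \<longlongrightarrow> 0) (at 0)" by (simp add: L_0 Qm_def Qp_def)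
    moreover have "(G \<longlongrightarrow> 0) (at 0)"
      using DERIV_isCont[OF has_derivative_G[of 0]] G_0 by (simp add: isCont_def)
    ultimately have "((\<lambda>y. - (L y / y) + G y) \<longlongrightarrow> F 0) (at 0)"
      using tendsto_add[OF tendsto_minus] by (fastforce simp: F_def G_0)
    then show ?thesis
      unfolding isCont_def
      by (rule Lim_transform_eventually) (auto simp: eventually_at_filter F_def)
  qed
  then have "isCont F x" for x
    using DERIV_isCont[OF has_derivative_F] by (cases "x = 0") auto
  then show ?thesis by (simp add: continuous_at_imp_continuous_on)
qed

lemma F_symmetric_difference: "F k - F (- k) = 2 * G k - 2 * (L k / k)"
proof -
  have "(r * (- k) - q) / p = - ((r * k + q) / p)" "(r * (- k) + q) / p = - ((r * k - q) / p)"
    using p_pos by (simp_all add: field_simps)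
  then have "G (- k) = - G k" by (simp add: G_def Qm_def Qp_def arctan_minus algebra_simps)
  moreover have "L (- k) = L k" by (simp add: L_def Qm_def Qp_def)
  ultimately show ?thesis by (simp add: F_def G_0)
qed

lemma tendsto_L_over_x: "((\<lambda>x. L x / x) \<longlongrightarrow> 0) at_top"
proof -
  have "((\<lambda>x. ln (1 - 2 * q * x + r * x\<^sup>2) / x) \<longlongrightarrow> 0) at_top"
       "((\<lambda>x. ln (1 + 2 * q * x + r * x\<^sup>2) / x) \<longlongrightarrow> 0) at_top"
    using r_pos by real_asymp+
  then have "((\<lambda>x. (ln (Qm x) / x + ln (Qp x) / x) / 2) \<longlongrightarrow> (0 + 0) / 2) at_top"
    unfolding Qm_def Qp_def by (intro tendsto_intros) simp_all
  then show ?thesis by (simp add: L_def add_divide_distrib mult.commute)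
qed

lemma tendsto_G: "(G \<longlongrightarrow> p * pi) at_top"
proof -
  have "((\<lambda>x. ln (1 - 2 * q * x + r * x\<^sup>2) - ln (1 + 2 * q * x + r * x\<^sup>2)) \<longlongrightarrow> 0) at_top"
       "((\<lambda>x. arctan ((r * x - q) / p)) \<longlongrightarrow> pi / 2) at_top"
       "((\<lambda>x. arctan ((r * x + q) / p)) \<longlongrightarrow> pi / 2) at_top"
    using r_pos p_pos by real_asymp+
  then have "(G \<longlongrightarrow> q / 2 * 0 + p * (pi / 2 + pi / 2)) at_top"
    unfolding G_def[abs_def] Qm_def Qp_def by (intro tendsto_intros)
  then show ?thesis by simp
qed

lemma tendsto_F_symmetric_difference: "((\<lambda>k. F k - F (- k)) \<longlongrightarrow> 2 * pi * p) at_top"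
proof -
  have "((\<lambda>k. 2 * G k - 2 * (L k / k)) \<longlongrightarrow> 2 * (p * pi) - 2 * 0) at_top"
    by (intro tendsto_intros tendsto_G tendsto_L_over_x)
  then show ?thesis by (simp add: F_symmetric_difference ac_simps)
qed

end

lemma ln_norm_one_plus_sq:
  fixes s :: complex and x :: real
  assumes "0 < Re s"
  shows "ln (cmod (1 + s\<^sup>2 * (of_real x)\<^sup>2)) = log_quadratic.L (Im s) ((Re s)\<^sup>2 + (Im s)\<^sup>2) x"
proof -
  interpret log_quadratic "Re s" "Im s" "(Re s)\<^sup>2 + (Im s)\<^sup>2"
    using assms by unfold_locales simp_all
  have "(cmod (1 + s\<^sup>2 * (of_real x)\<^sup>2))\<^sup>2 =
      (1 + ((Re s)\<^sup>2 - (Im s)\<^sup>2) * x\<^sup>2)\<^sup>2 + (2 * Re s * Im s * x\<^sup>2)\<^sup>2"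
    unfolding cmod_power2 by (simp add: power2_eq_square algebra_simps)
  also have "\<dots> = Qm x * Qp x"
    unfolding Qm_def Qp_def by (simp add: power2_eq_square algebra_simps)
  finally have "cmod (1 + s\<^sup>2 * (of_real x)\<^sup>2) = sqrt (Qm x * Qp x)"
    by (metis norm_ge_zero real_sqrt_unique)
  then show ?thesis
    using Qm_pos[of x] Qp_pos[of x] by (simp add: ln_sqrt ln_mult L_def)
qed

lemma ln_norm_antiderivative:
  fixes a :: complex
  assumes nz: "\<And>x::real. 1 + a\<^sup>2 * (of_real x)\<^sup>2 \<noteq> 0"
  shows "\<exists>F. continuous_on UNIV F \<and>
    (\<forall>x. x \<noteq> 0 \<longrightarrow> (F has_real_derivative ln (cmod (1 + a\<^sup>2 * (of_real x)\<^sup>2)) / x\<^sup>2) (at x)) \<and>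
    ((\<lambda>k. F k - F (- k)) \<longlongrightarrow> 2 * pi * \<bar>Re a\<bar>) at_top"
proof (cases "a = 0")
  case True
  then show ?thesis by (intro exI[of _ "\<lambda>_. 0"]) (auto intro!: derivative_eq_intros)
next
  case False
  have "Re a \<noteq> 0"
  proof
    assume "Re a = 0"
    then have a_eq: "a = \<i> * of_real (Im a)" by (simp add: complex_eq_iff)
    then have "Im a \<noteq> 0" using False by auto
    have "1 + a\<^sup>2 * (of_real (1 / Im a))\<^sup>2 = 0"
      using \<open>Im a \<noteq> 0\<close> by (subst a_eq) (simp add: power_mult_distrib field_simps)
    then show False using nz by blast
  qed
  define s where "s = (if Re a > 0 then a else - a)"
  have s: "0 < Re s" "s\<^sup>2 = a\<^sup>2" "Re s = \<bar>Re a\<bar>" using \<open>Re a \<noteq> 0\<close> by (auto simp: s_def)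
  interpret log_quadratic "Re s" "Im s" "(Re s)\<^sup>2 + (Im s)\<^sup>2"
    using s by unfold_locales simp_all
  show ?thesis
    using continuous_on_F has_derivative_F tendsto_F_symmetric_difference
      ln_norm_one_plus_sq[OF s(1)] s
    by (intro exI[of _ F]) auto
qed

section \<open>The energy\<close>

lemma nonneg_has_integral_UNIV_antiderivative:
  fixes g F :: "real \<Rightarrow> real"
  assumes nonneg: "\<And>x. 0 \<le> g x" and cont: "continuous_on UNIV F"
    and deriv: "\<And>x. x \<noteq> 0 \<Longrightarrow> (F has_real_derivative g x) (at x)"
    and lim: "((\<lambda>t. F t - F (- t)) \<longlongrightarrow> I) at_top"
  shows "(g has_integral I) UNIV"
proof -
  define f where "f k x = (if x \<in> {- real k..real k} then g x else 0)" for k :: nat and x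
  have "(g has_integral F (real k) - F (- real k)) {- real k..real k}" for k :: nat
  proof (rule fundamental_theorem_of_calculus_interior_strong[of "{0}"])
    show "continuous_on {- real k..real k} F" using cont by (rule continuous_on_subset) simp
  qed (use deriv in \<open>auto simp: has_real_derivative_iff_has_vector_derivative\<close>)
  then have "(f k has_integral F (real k) - F (- real k)) UNIV" for k
    unfolding f_def using has_integral_restrict_UNIV by blast
  moreover have "f k x \<le> f (Suc k) x" for k x
    using nonneg[of x] by (auto simp: f_def)
  moreover have "(\<lambda>k. f k x) \<longlonglongrightarrow> g x" for x
  proof (rule Lim_transform_eventually[OF tendsto_const])
    show "\<forall>\<^sub>F k in sequentially. g x = f k x"
      using eventually_ge_at_top[of "nat \<lceil>\<bar>x\<bar>\<rceil>"] by eventually_elim (auto simp: f_def)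
  qed
  moreover have "(\<lambda>k. F (real k) - F (- real k)) \<longlonglongrightarrow> I"
    using filterlim_compose[OF lim filterlim_real_sequentially] by simp
  ultimately show ?thesis
    by (rule has_integral_monotone_convergence_increasing)
qed

lemma has_integral_energy:
  assumes D: "sig \<in> Delta1 n"
  shows "((\<lambda>z. (1 / pi) * (1 / z\<^sup>2) * ln (linear_gf n sig z)) has_integral energy n sig) UNIV"
proof -
  obtain a where cp: "char_pol n sig = (\<Prod>i<n. [:- a i, 1:])" by (rule char_pol_factorized)
  define h where "h i x = ln (cmod (1 + (a i)\<^sup>2 * (of_real x)\<^sup>2)) / x\<^sup>2" for i x
  have "\<forall>i\<in>{..<n}. \<exists>F. continuous_on UNIV F \<and> (\<forall>x. x \<noteq> 0 \<longrightarrow> (F has_real_derivative h i x) (at x)) \<and>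
      ((\<lambda>k. F k - F (- k)) \<longlongrightarrow> 2 * pi * \<bar>Re (a i)\<bar>) at_top"
    unfolding h_def using ln_norm_antiderivative ln_linear_gf(2)[OF D cp] by blast
  then obtain Fs where Fs: "\<And>i. i < n \<Longrightarrow> continuous_on UNIV (Fs i)"
    "\<And>i x. i < n \<Longrightarrow> x \<noteq> 0 \<Longrightarrow> (Fs i has_real_derivative h i x) (at x)"
    "\<And>i. i < n \<Longrightarrow> ((\<lambda>k. Fs i k - Fs i (- k)) \<longlongrightarrow> 2 * pi * \<bar>Re (a i)\<bar>) at_top"
    by (metis bchoice lessThan_iff)
  have integrand: "(1 / pi) * (1 / x\<^sup>2) * ln (linear_gf n sig x) = (\<Sum>i<n. h i x / (2 * pi))" for x
    unfolding ln_linear_gf(1)[OF D cp] h_def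
    by (simp add: sum_divide_distrib[symmetric] field_simps)
  show ?thesis
  proof (rule nonneg_has_integral_UNIV_antiderivative[where F = "\<lambda>x. \<Sum>i<n. Fs i x / (2 * pi)"])
    show "0 \<le> (1 / pi) * (1 / x\<^sup>2) * ln (linear_gf n sig x)" for x
      using linear_gf_ge_1 by simp
    show "continuous_on UNIV (\<lambda>x. \<Sum>i<n. Fs i x / (2 * pi))"
      using Fs(1) by (intro continuous_intros) auto
    show "((\<lambda>x. \<Sum>i<n. Fs i x / (2 * pi)) has_real_derivative
        (1 / pi) * (1 / x\<^sup>2) * ln (linear_gf n sig x)) (at x)" if "x \<noteq> 0" for x
      unfolding integrand using Fs(2) that by (intro DERIV_sum DERIV_cdivide) auto
    have "((\<lambda>t. \<Sum>i<n. (Fs i t - Fs i (- t)) / (2 * pi)) \<longlongrightarrow> (\<Sum>i<n. 2 * pi * \<bar>Re (a i)\<bar> / (2 * pi))) at_top"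
      using Fs(3) by (intro tendsto_intros) auto
    then show "((\<lambda>t. (\<Sum>i<n. Fs i t / (2 * pi)) - (\<Sum>i<n. Fs i (- t) / (2 * pi))) \<longlongrightarrow> energy n sig) at_top"
      by (simp add: energy_factorized[OF cp] sum_subtractf diff_divide_distrib)
  qed
qed

lemma has_integral_less_of_gap:
  fixes f g :: "real \<Rightarrow> real"
  assumes f: "(f has_integral I) UNIV" and g: "(g has_integral J) UNIV"
    and le: "\<And>x. f x \<le> g x" and ab: "a < b" and \<delta>: "0 < \<delta>"
    and gap: "\<And>x. x \<in> {a..b} \<Longrightarrow> f x + \<delta> \<le> g x"
  shows "I < J"
proof -
  have "((\<lambda>x. if x \<in> {a..b} then \<delta> else 0) has_integral \<delta> * (b - a)) UNIV"
    using has_integral_restrict_UNIV[of "{a..b}" "\<lambda>_. \<delta>"] has_integral_const_real[of \<delta> a b] ab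
    by (simp add: mult.commute)
  then have "\<delta> * (b - a) \<le> J - I"
    by (rule has_integral_le[OF _ has_integral_diff[OF g f]]) (use le gap in \<open>auto simp: algebra_simps\<close>)
  moreover have "0 < \<delta> * (b - a)" using \<delta> ab by simp
  ultimately show ?thesis by simp
qed

lemma ln_diff_ge_inverse:
  fixes u v :: real
  assumes "0 < u" and "u + 1 \<le> v"
  shows "1 / v \<le> ln v - ln u"
proof -
  have "ln (u / v) \<le> u / v - 1" using assms by (intro ln_le_minus_one) simp
  also have "\<dots> = (u - v) / v" using assms by (simp add: field_simps)
  also have "\<dots> \<le> - 1 / v" using assms by (intro divide_right_mono) auto
  finally show ?thesis using assms by (simp add: ln_div)
qed

lemma linear_gf_mono: "0 \<le> x \<Longrightarrow> x \<le> y \<Longrightarrow> linear_gf n sig x \<le> linear_gf n sig y"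
  unfolding linear_gf_def by (intro add_left_mono sum_mono mult_left_mono power_mono) auto

lemma linear_gf_quasi_le: "quasi_le n s1 s2 \<Longrightarrow> linear_gf n s1 x \<le> linear_gf n s2 x"
  unfolding linear_gf_def quasi_le_def
  by (intro add_left_mono sum_mono mult_right_mono) (auto simp: power_mult)

lemma linear_gf_quasi_less_gap:
  assumes "quasi_less n s1 s2" and "1 \<le> x"
  shows "linear_gf n s1 x + 1 \<le> linear_gf n s2 x"
proof -
  let ?d = "\<lambda>j. (real (c_lin n s2 (2 * j)) - real (c_lin n s1 (2 * j))) * x ^ (2 * j)"
  obtain j0 where j0: "j0 \<in> {1..n div 2}" "c_lin n s1 (2 * j0) < c_lin n s2 (2 * j0)"
    using assms(1) by (auto simp: quasi_less_def)
  have "0 \<le> ?d j" if "j \<in> {1..n div 2}" for j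
    using assms that by (auto simp: quasi_less_def quasi_le_def)
  then have "?d j0 \<le> (\<Sum>j = 1..n div 2. ?d j)"
    using j0(1) by (intro member_le_sum) auto
  moreover have "1 \<le> ?d j0"
  proof -
    have "1 \<le> real (c_lin n s2 (2 * j0)) - real (c_lin n s1 (2 * j0))" using j0(2) by linarith
    moreover have "1 \<le> x ^ (2 * j0)" using assms(2) by (simp add: one_le_power)
    ultimately show ?thesis using mult_mono[of 1 _ 1] by force
  qed
  ultimately show ?thesis
    by (simp add: linear_gf_def sum_subtractf left_diff_distrib)
qed

lemma energy_strict_mono:
  assumes D1: "s1 \<in> Delta1 n" and D2: "s2 \<in> Delta1 n" and less: "quasi_less n s1 s2"
  shows "energy n s1 < energy n s2"
proof -
  let ?R1 = "linear_gf n s1" and ?R2 = "linear_gf n s2"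
  define \<delta> where "\<delta> = 1 / (4 * pi * ?R2 2)"
  have le: "(1 / pi) * (1 / x\<^sup>2) * ln (?R1 x) \<le> (1 / pi) * (1 / x\<^sup>2) * ln (?R2 x)" for x
    using less linear_gf_quasi_le[of n s1 s2 x] linear_gf_ge_1[of n s1 x]
    by (intro mult_left_mono) (auto simp: quasi_less_def)
  have \<delta>_pos: "0 < \<delta>" using linear_gf_ge_1[of n s2 2] by (simp add: \<delta>_def)
  have gap: "(1 / pi) * (1 / x\<^sup>2) * ln (?R1 x) + \<delta> \<le> (1 / pi) * (1 / x\<^sup>2) * ln (?R2 x)"
    if x: "x \<in> {1..2}" for x
  proof -
    have "1 / ?R2 2 \<le> 1 / ?R2 x"
      using x linear_gf_mono[of x 2 n s2] linear_gf_ge_1[of n s2 x] by (simp add: frac_le)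
    also have "\<dots> \<le> ln (?R2 x) - ln (?R1 x)"
      using linear_gf_ge_1[of n s1 x] linear_gf_quasi_less_gap[OF less] x
      by (intro ln_diff_ge_inverse) auto
    finally have "1 / ?R2 2 \<le> ln (?R2 x) - ln (?R1 x)" .
    moreover have "1 / 4 \<le> 1 / x\<^sup>2"
      using x power_mono[of x 2 2] by (intro frac_le) auto
    ultimately have "1 / 4 * (1 / ?R2 2) \<le> 1 / x\<^sup>2 * (ln (?R2 x) - ln (?R1 x))"
      using linear_gf_ge_1[of n s2 2] by (intro mult_mono) auto
    then have "1 / pi * (1 / 4 * (1 / ?R2 2)) \<le> 1 / pi * (1 / x\<^sup>2 * (ln (?R2 x) - ln (?R1 x)))"
      by (intro mult_left_mono) auto
    then show ?thesis by (simp add: \<delta>_def right_diff_distrib)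
  qed
  show ?thesis
    using has_integral_less_of_gap[where a = 1 and b = 2, OF has_integral_energy[OF D1]
        has_integral_energy[OF D2] le _ \<delta>_pos gap]
    by simp
qed

theorem theorem3p1:
  fixes n :: nat
  shows "(\<forall>sig \<in> Delta1 n.
            ((\<lambda>z::real. (1 / pi) * (1 / z^2) *
                ln (1 + (\<Sum>j = 1..n div 2. real (c_lin n sig (2*j)) * z^(2*j))))
              has_integral energy n sig) UNIV) \<and>
         (\<forall>s1 \<in> Delta1 n. \<forall>s2 \<in> Delta1 n.
            quasi_less n s1 s2 \<longrightarrow> energy n s1 < energy n s2)"
  using has_integral_energy energy_strict_mono unfolding linear_gf_def by blast

end
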